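(* Let $G$ be a signed digraph with $n$ vertices and without positive cycles, and let $f$ be a Boolean network on $G$ having a fixed point. Then $f$ has a synchronizing word of length $n$.
   Context: A signed digraph on $V$ is $(V,E)$ with $E\subseteq V\times V\times\{-1,1\}$; cycles have no repeated vertices (a loop is a cycle) and their sign is the product of arc signs. A Boolean network (BN) is $f:\{0,1\}^V\to\{0,1\}^V$; its signed interaction digraph has a positive (negative) arc from $j$ to $i$ iff for some $x$ with $x_j=0$, $f_i(x+e_j)-f_i(x)$ is positive (negative). A BN on $G$ is one whose signed interaction digraph is $G$. $f^i(x)$ is $x$ with $x_i$ replaced by $f_i(x)$; $f^{i_1\cdots i_\ell}=f^{i_\ell}\circ\cdots\circ f^{i_1}$; $w$ is synchronizing if $f^w$ is constant. *)

theory Defs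
  imports Main
begin

text \<open>Configurations are maps 'v \<Rightarrow> bool (False = 0, True = 1); a Boolean network is
  f :: ('v \<Rightarrow> bool) \<Rightarrow> ('v \<Rightarrow> bool). Signed arcs are triples (j, i, s) with s \<in> {-1,1}.\<close>

type_synonym 'v signed_digraph = "('v \<times> 'v \<times> int) set"

definition interaction_digraph :: "(('v \<Rightarrow> bool) \<Rightarrow> ('v \<Rightarrow> bool)) \<Rightarrow> 'v signed_digraph" where
  "interaction_digraph f =
     {(j, i, 1) | j i. \<exists>x. \<not> x j \<and> \<not> f x i \<and> f (x(j := True)) i}
   \<union> {(j, i, -1) | j i. \<exists>x. \<not> x j \<and> f x i \<and> \<not> f (x(j := True)) i}"

text \<open>A cycle: a nonempty list of distinct vertices vs together with a choice of arcs
  vs!k \<rightarrow> vs!((k+1) mod length vs) with signs ss!k (a loop is a cycle of length 1);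
  its sign is the product of the arc signs.\<close>
definition is_cycle :: "'v signed_digraph \<Rightarrow> 'v list \<Rightarrow> int list \<Rightarrow> bool" where
  "is_cycle G vs ss \<longleftrightarrow> vs \<noteq> [] \<and> distinct vs \<and> length ss = length vs \<and>
     (\<forall>k < length vs. (vs ! k, vs ! ((k + 1) mod length vs), ss ! k) \<in> G)"

definition has_positive_cycle :: "'v signed_digraph \<Rightarrow> bool" where
  "has_positive_cycle G \<longleftrightarrow> (\<exists>vs ss. is_cycle G vs ss \<and> prod_list ss = 1)"

text \<open>f^i(x) = x with x_i replaced by f_i(x); f^{i1...il} = f^{il} \<circ> ... \<circ> f^{i1}.\<close>
definition async_update :: "(('v \<Rightarrow> bool) \<Rightarrow> ('v \<Rightarrow> bool)) \<Rightarrow> 'v \<Rightarrow> ('v \<Rightarrow> bool) \<Rightarrow> ('v \<Rightarrow> bool)" where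
  "async_update f i x = x(i := f x i)"

definition word_update :: "(('v \<Rightarrow> bool) \<Rightarrow> ('v \<Rightarrow> bool)) \<Rightarrow> 'v list \<Rightarrow> ('v \<Rightarrow> bool) \<Rightarrow> ('v \<Rightarrow> bool)" where
  "word_update f w = fold (async_update f) w"

definition synchronizing :: "(('v \<Rightarrow> bool) \<Rightarrow> ('v \<Rightarrow> bool)) \<Rightarrow> 'v list \<Rightarrow> bool" where
  "synchronizing f w \<longleftrightarrow> (\<exists>c. \<forall>x. word_update f w x = c)"

end

theory Submission
  imports Defs
begin

(* Fix a fixed point z. For every proper subset S of the vertices some coordinate i outside S is
  forced, i.e. f_i(x) = z_i whenever x agrees with z on S; updating forced coordinates one after
  the other then drives every configuration to z within n steps. If no coordinate outside S were
  forced, flipping the coordinates outside S one at a time would give every i outside S an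
  in-neighbour j outside S such that moving x_j away from z_j moves f_i(x) away from z_i. Such an
  arc has sign s(z_j) s(z_i), where s maps True to 1 and False to -1, so following these arcs
  backwards closes a cycle whose sign is a product of squares: a positive cycle. *)

definition closed_walk :: "('a \<Rightarrow> 'a \<Rightarrow> bool) \<Rightarrow> 'a list \<Rightarrow> bool" where
  "closed_walk R vs \<longleftrightarrow> vs \<noteq> [] \<and> successively R (vs @ [hd vs])"

lemma closed_walk_nth:
  assumes "closed_walk R vs" and "k < length vs"
  shows "R (vs ! k) (vs ! ((k + 1) mod length vs))"
proof -
  have "R ((vs @ [hd vs]) ! k) ((vs @ [hd vs]) ! Suc k)"
    using assms successively_nth[of R "vs @ [hd vs]" k] by (simp add: closed_walk_def)
  moreover have "Suc k = length vs \<or> Suc k < length vs"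
    using assms(2) by linarith
  ultimately show ?thesis
    using assms by (auto simp: nth_append hd_conv_nth closed_walk_def)
qed

lemma closed_walk_mono:
  assumes "closed_walk R vs" and "\<And>x y. R x y \<Longrightarrow> Q x y"
  shows "closed_walk Q vs"
  using assms successively_mono unfolding closed_walk_def by blast

lemma closed_walk_inner_loop:
  assumes "successively R (xs @ [y] @ ys @ [y] @ zs)"
  shows "closed_walk R (y # ys)"
proof -
  have "successively R (xs @ (y # ys @ [y]) @ zs)"
    using assms by simp
  then have "successively R (y # ys @ [y])"
    unfolding successively_append_iff by blast
  then show ?thesis
    by (simp add: closed_walk_def)
qed

lemma closed_walk_distinct:
  assumes "closed_walk R vs"
  shows "\<exists>us. closed_walk R us \<and> distinct us \<and> set us \<subseteq> set vs"
  using assms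
proof (induction vs rule: length_induct)
  case (1 vs)
  show ?case
  proof (cases "distinct vs")
    case False
    then obtain xs y ys zs where vs: "vs = xs @ [y] @ ys @ [y] @ zs"
      using not_distinct_decomp by blast
    have "successively R (xs @ [y] @ ys @ [y] @ (zs @ [hd vs]))"
      using "1.prems" by (simp add: closed_walk_def vs)
    then have "closed_walk R (y # ys)"
      by (rule closed_walk_inner_loop)
    moreover have "length (y # ys) < length vs" "set (y # ys) \<subseteq> set vs"
      using vs by auto
    ultimately show ?thesis
      using "1.IH" by blast
  qed (use "1.prems" in blast)
qed

lemma closed_walk_exists:
  assumes "finite T" and "T \<noteq> {}" and pred: "\<forall>i\<in>T. \<exists>j\<in>T. R j i"
  shows "\<exists>vs. closed_walk R vs \<and> distinct vs \<and> set vs \<subseteq> T"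
proof -
  have "\<exists>ps. length ps = Suc n \<and> set ps \<subseteq> T \<and> successively R ps" for n
  proof (induction n)
    case 0
    then show ?case
      using \<open>T \<noteq> {}\<close> by (auto intro: exI[of _ "[_]"])
  next
    case (Suc n)
    then obtain p ps where
      ps: "length (p # ps) = Suc n" "set (p # ps) \<subseteq> T" "successively R (p # ps)"
      by (metis length_Suc_conv)
    moreover obtain j where "j \<in> T" "R j p"
      using pred ps(2) by auto
    ultimately show ?case
      by (intro exI[of _ "j # p # ps"]) auto
  qed
  then obtain ps where ps: "length ps = Suc (card T)" "set ps \<subseteq> T" "successively R ps"
    by blast
  have "\<not> distinct ps"
    using ps card_mono[OF \<open>finite T\<close> ps(2)] distinct_card by fastforce
  then obtain xs y ys zs where "ps = xs @ [y] @ ys @ [y] @ zs"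
    using not_distinct_decomp by blast
  then have "closed_walk R (y # ys)" "set (y # ys) \<subseteq> T"
    using ps closed_walk_inner_loop by auto
  then show ?thesis
    using closed_walk_distinct by (meson order_trans)
qed

lemma prod_list_map2_times:
  "length xs = length ys \<Longrightarrow>
    prod_list (map2 (*) xs ys) = prod_list xs * (prod_list ys :: 'a::comm_monoid_mult)"
  by (induction xs ys rule: list_induct2) (auto simp: ac_simps)

lemma prod_list_rotate1: "prod_list (rotate1 xs) = (prod_list xs :: 'a::comm_monoid_mult)"
  by (cases xs) (auto simp: mult.commute)

lemma prod_list_unit_sign:
  "set xs \<subseteq> {-1, 1} \<Longrightarrow> prod_list xs \<in> {-1, 1 :: int}"
  by (induction xs) auto

(* The arc signs \<sigma> j * \<sigma> i arise from the all-positive signing by switching at the vertices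
  with \<sigma> v = -1, so the sign of the cycle is the square of the product of the \<sigma> v. *)
lemma has_positive_cycle_if_switched_cycle:
  assumes walk: "closed_walk (\<lambda>j i. (j, i, \<sigma> j * \<sigma> i) \<in> G) vs" and "distinct vs"
    and sign: "\<And>v. \<sigma> v \<in> {-1, 1}"
  shows "has_positive_cycle G"
proof -
  let ?s = "map \<sigma> vs"
  let ?ss = "map2 (*) ?s (rotate1 ?s)"
  have "vs \<noteq> []"
    using walk by (simp add: closed_walk_def)
  have "is_cycle G vs ?ss"
    unfolding is_cycle_def
  proof (intro conjI allI impI)
    fix k assume k: "k < length vs"
    have "?ss ! k = \<sigma> (vs ! k) * \<sigma> (vs ! ((k + 1) mod length vs))"
      using k \<open>vs \<noteq> []\<close> by (simp add: nth_rotate1)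
    then show "(vs ! k, vs ! ((k + 1) mod length vs), ?ss ! k) \<in> G"
      using closed_walk_nth[OF walk k] by simp
  qed (use \<open>vs \<noteq> []\<close> \<open>distinct vs\<close> in auto)
  moreover have "prod_list ?ss = 1"
  proof -
    have "prod_list ?s \<in> {-1, 1}"
      using sign by (intro prod_list_unit_sign) auto
    then show ?thesis
      by (auto simp: prod_list_map2_times prod_list_rotate1 simp del: rotate1.simps)
  qed
  ultimately show ?thesis
    unfolding has_positive_cycle_def by blast
qed

definition bool_sign :: "bool \<Rightarrow> int" where
  "bool_sign b = (if b then 1 else -1)"

definition destabilizes :: "(('v \<Rightarrow> bool) \<Rightarrow> ('v \<Rightarrow> bool)) \<Rightarrow> ('v \<Rightarrow> bool) \<Rightarrow> 'v \<Rightarrow> 'v \<Rightarrow> bool" where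
  "destabilizes f z j i \<longleftrightarrow> (\<exists>x. x j = z j \<and> f x i = z i \<and> f (x(j := \<not> z j)) i \<noteq> z i)"

lemma interaction_digraph_memI:
  assumes "f (x(j := False)) i \<noteq> f (x(j := True)) i"
  shows "(j, i, if f (x(j := True)) i then 1 else -1) \<in> interaction_digraph f"
proof -
  let ?x = "x(j := False)"
  have x: "\<not> ?x j" "?x(j := True) = x(j := True)"
    by simp_all
  show ?thesis
  proof (cases "f (x(j := True)) i")
    case True
    then have "\<not> ?x j \<and> \<not> f ?x i \<and> f (?x(j := True)) i"
      using assms x by simp
    then show ?thesis
      unfolding interaction_digraph_def using True by (simp only: if_True) blast
  next
    case False
    then have "\<not> ?x j \<and> f ?x i \<and> \<not> f (?x(j := True)) i"
      using assms x by simp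
    then show ?thesis
      unfolding interaction_digraph_def using False by (simp only: if_False) blast
  qed
qed

lemma destabilizes_imp_arc:
  assumes "destabilizes f z j i"
  shows "(j, i, bool_sign (z j) * bool_sign (z i)) \<in> interaction_digraph f"
proof -
  obtain x where x: "x j = z j" "f x i = z i" "f (x(j := \<not> z j)) i \<noteq> z i"
    using assms by (auto simp: destabilizes_def)
  then have "f (x(j := z j)) i = z i"
    by (simp add: fun_upd_idem)
  then have "f (x(j := True)) i = (z j = z i)" "f (x(j := False)) i = (z j \<noteq> z i)"
    using x(3) by (cases "z j"; auto)+
  then show ?thesis
    using interaction_digraph_memI[of f x j i] by (auto simp: bool_sign_def)
qed

lemma exists_destabilizing_coordinate:
  assumes "finite D" and fixed: "f z i = z i"
    and "\<forall>j. j \<notin> D \<longrightarrow> y j = z j" and "f y i \<noteq> z i"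
  shows "\<exists>j\<in>D. destabilizes f z j i"
  using assms(1,3,4)
proof (induction D arbitrary: y rule: finite_induct)
  case empty
  then have "y = z"
    by (simp add: fun_eq_iff)
  then show ?case
    using empty.prems(2) fixed by simp
next
  case (insert a D)
  let ?y' = "y(a := z a)"
  show ?case
  proof (cases "f ?y' i = z i")
    case True
    have "y a \<noteq> z a"
    proof
      assume "y a = z a"
      then have "?y' = y"
        by (simp add: fun_eq_iff)
      with True insert.prems(2) show False
        by simp
    qed
    then have "?y'(a := \<not> z a) = y"
      by (simp add: fun_eq_iff)
    then have "destabilizes f z a i"
      unfolding destabilizes_def using True insert.prems(2) by (intro exI[of _ ?y']) simp
    then show ?thesis
      by blast
  next
    case False
    have "\<forall>j. j \<notin> D \<longrightarrow> ?y' j = z j"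
      using insert.prems(1) by simp
    then have "\<exists>j\<in>D. destabilizes f z j i"
      using False by (rule insert.IH)
    then show ?thesis
      by blast
  qed
qed

definition forced_by :: "(('v \<Rightarrow> bool) \<Rightarrow> ('v \<Rightarrow> bool)) \<Rightarrow> ('v \<Rightarrow> bool) \<Rightarrow> 'v set \<Rightarrow> 'v \<Rightarrow> bool" where
  "forced_by f z S i \<longleftrightarrow> (\<forall>x. (\<forall>j\<in>S. x j = z j) \<longrightarrow> f x i = z i)"

lemma forced_coordinate_exists:
  assumes "\<not> has_positive_cycle (interaction_digraph f)" and "f z = z"
    and "finite (- S)" and "S \<noteq> UNIV"
  shows "\<exists>i\<in>- S. forced_by f z S i"
proof (rule ccontr)
  assume unforced: "\<not> ?thesis"
  have "\<forall>i\<in>- S. \<exists>j\<in>- S. destabilizes f z j i"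
  proof
    fix i assume "i \<in> - S"
    then obtain y where "\<forall>j\<in>S. y j = z j" "f y i \<noteq> z i"
      using unforced unfolding forced_by_def by blast
    then have "\<forall>j. j \<notin> - S \<longrightarrow> y j = z j" "f y i \<noteq> z i"
      by simp_all
    moreover have "f z i = z i"
      using \<open>f z = z\<close> by simp
    ultimately show "\<exists>j\<in>- S. destabilizes f z j i"
      using exists_destabilizing_coordinate \<open>finite (- S)\<close> by metis
  qed
  moreover have "- S \<noteq> {}"
    using \<open>S \<noteq> UNIV\<close> by auto
  ultimately obtain vs where walk: "closed_walk (destabilizes f z) vs" and "distinct vs"
    using closed_walk_exists \<open>finite (- S)\<close> by blast
  have "closed_walk (\<lambda>j i. (j, i, bool_sign (z j) * bool_sign (z i)) \<in> interaction_digraph f) vs"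
    using walk by (rule closed_walk_mono) (rule destabilizes_imp_arc)
  then have "has_positive_cycle (interaction_digraph f)"
    using \<open>distinct vs\<close>
    by (rule has_positive_cycle_if_switched_cycle[where \<sigma> = "bool_sign \<circ> z", unfolded comp_def])
      (simp add: bool_sign_def)
  with assms(1) show False ..
qed

lemma word_update_Cons: "word_update f (i # w) x = word_update f w (async_update f i x)"
  by (simp add: word_update_def)

lemma word_update_to_fixed_point:
  fixes f :: "('v::finite \<Rightarrow> bool) \<Rightarrow> ('v \<Rightarrow> bool)"
  assumes step: "\<And>S. S \<noteq> UNIV \<Longrightarrow> \<exists>i\<in>- S. forced_by f z S i"
  shows "\<exists>w. length w = card (- S) \<and> (\<forall>x. (\<forall>j\<in>S. x j = z j) \<longrightarrow> word_update f w x = z)"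
proof (induction "card (- S)" arbitrary: S)
  case 0
  then have "- S = {}"
    by simp
  then have "S = UNIV"
    by blast
  then show ?case
    using 0 by (auto simp: word_update_def fun_eq_iff intro!: exI[of _ "[]"])
next
  case (Suc n)
  then have "S \<noteq> UNIV"
    by auto
  then obtain i where i: "i \<notin> S" "forced_by f z S i"
    using step by blast
  have "card (- insert i S) = n"
    using Suc.hyps(2) i(1) by (simp add: Compl_insert card_Diff_singleton)
  then obtain w where w: "length w = n"
    "\<forall>x. (\<forall>j\<in>insert i S. x j = z j) \<longrightarrow> word_update f w x = z"
    using Suc.hyps(1) by blast
  have "word_update f (i # w) x = z" if "\<forall>j\<in>S. x j = z j" for x
    using w(2) i(2) that by (simp add: word_update_Cons async_update_def forced_by_def)
  then show ?case
    using w(1) Suc.hyps(2) by (intro exI[of _ "i # w"]) simp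
qed

theorem proposition9:
  fixes f :: "('v::finite \<Rightarrow> bool) \<Rightarrow> ('v \<Rightarrow> bool)"
  assumes "\<not> has_positive_cycle (interaction_digraph f)"
    and "\<exists>x. f x = x"
  shows "\<exists>w. length w = card (UNIV :: 'v set) \<and> synchronizing f w"
proof -
  obtain z where "f z = z"
    using assms(2) by blast
  then have forced: "\<exists>i\<in>- S. forced_by f z S i" if "S \<noteq> UNIV" for S
    using forced_coordinate_exists[OF assms(1)] that by simp
  obtain w where "length w = card (- {} :: 'v set)" "\<forall>x. word_update f w x = z"
    using word_update_to_fixed_point[OF forced, of "{}"] by auto
  then show ?thesis
    unfolding synchronizing_def by auto
qed

end
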